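(* Let $V$ be a finite-dimensional complex vector space and let $c_1,c_2\in\wedge^2V$ be such that $c_\lambda=\lambda_1c_1+\lambda_2c_2$ is nondegenerate for generic $\lambda\in\mathbb C^2$. Let $K\subset V$ be a subspace, let $p:V\to V'=V/K$ be the projection, and assume that $c_i'=\wedge^2p(c_i)$, $i=1,2$, are linearly independent. Set $c'_\lambda=\lambda_1c'_1+\lambda_2c'_2$, $R_0'=\max_\lambda\operatorname{rank}c'_\lambda$, and $$d_\lambda=\dim\ c_\lambda^\sharp(K^\perp)\big/\bigl(K\cap c_\lambda^\sharp(K^\perp)\bigr).$$ Then $\operatorname{rank}c'_\lambda=R_0'$ for all $\lambda\in\mathbb C^2\setminus\{0\}$ if and only if $d_\lambda$ is independent of $\lambda\in\mathbb C^2\setminus\{0\}$.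
   Context: $K^\perp\subset V^*$ denotes the annihilator of $K$. For $b\in\wedge^2V$, $b^\sharp:V^*\to V$ is contraction in the first argument, and $\operatorname{rank}b=\dim\operatorname{im}b^\sharp$. *)

theory Defs
  imports "HOL-Analysis.Analysis"
begin

text \<open>V is modelled as complex^'n (standard basis e_i); V* is modelled
  as complex^'n via the dual basis, with the natural (non-conjugated) pairing.
  An element b of the second exterior power of V is modelled by its coefficient
  matrix B (skew-symmetric), b = sum_{i,j} B_ij e_i (x) e_j.  Contraction in the
  first argument is then b^sharp(xi) = sum_{i,j} xi_i B_ij e_j, i.e. xi v* B.\<close>

definition pairing :: "complex^'n \<Rightarrow> complex^'n \<Rightarrow> complex" where
  "pairing xi v = (\<Sum>i\<in>UNIV. xi $ i * v $ i)"

definition is_bivector :: "complex^'n^'n \<Rightarrow> bool" where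
  "is_bivector B \<longleftrightarrow> transpose B = - B"

definition sharp :: "complex^'n^'n \<Rightarrow> complex^'n \<Rightarrow> complex^'n" where
  "sharp B xi = xi v* B"

definition bv_rank :: "complex^'n^'n \<Rightarrow> nat" where
  "bv_rank B = vec.dim (range (sharp B))"

definition nondegenerate :: "complex^'n^'n \<Rightarrow> bool" where
  "nondegenerate B \<longleftrightarrow> bij (sharp B)"

definition pencil :: "complex \<Rightarrow> complex \<Rightarrow> complex^'n^'n \<Rightarrow> complex^'n^'n \<Rightarrow> complex^'n^'n" where
  "pencil l1 l2 C1 C2 = (\<chi> i j. l1 * C1 $ i $ j + l2 * C2 $ i $ j)"

definition annih :: "(complex^'n) set \<Rightarrow> (complex^'n) set" where
  "annih K = {xi. \<forall>v\<in>K. pairing xi v = 0}"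

text \<open>Quotient V' = V/K.  Its dual (V')* is identified with K^perp via p*, and
  the bivector wedge^2 p (c) has sharp map (V')* -> V', xi |-> p(c^sharp xi).
  Hence its image is p(c^sharp(K^perp)); a subspace of V/K is represented by its
  preimage under p, whose dimension exceeds that of the subspace by dim K.\<close>
definition quot_image_preimage :: "(complex^'n) set \<Rightarrow> complex^'n^'n \<Rightarrow> (complex^'n) set" where
  "quot_image_preimage K B = {x + k | x k. x \<in> sharp B ` annih K \<and> k \<in> K}"

text \<open>rank of wedge^2 p (c) = dim of p(c^sharp(K^perp)) in V/K\<close>
definition quot_rank :: "(complex^'n) set \<Rightarrow> complex^'n^'n \<Rightarrow> nat" where
  "quot_rank K B = vec.dim (quot_image_preimage K B) - vec.dim K"

text \<open>wedge^2 p (c) = 0 iff its sharp map vanishes iff c^sharp(K^perp) is contained in K.\<close>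
definition quot_zero :: "(complex^'n) set \<Rightarrow> complex^'n^'n \<Rightarrow> bool" where
  "quot_zero K B \<longleftrightarrow> sharp B ` annih K \<subseteq> K"

text \<open>linear independence of c_1', c_2' (note wedge^2 p is linear, so
  l1 c_1' + l2 c_2' = wedge^2 p (c_lambda))\<close>
definition quot_lin_indep :: "(complex^'n) set \<Rightarrow> complex^'n^'n \<Rightarrow> complex^'n^'n \<Rightarrow> bool" where
  "quot_lin_indep K C1 C2 \<longleftrightarrow>
     (\<forall>l1 l2. quot_zero K (pencil l1 l2 C1 C2) \<longrightarrow> l1 = 0 \<and> l2 = 0)"

definition d_dim :: "(complex^'n) set \<Rightarrow> complex^'n^'n \<Rightarrow> nat" where
  "d_dim K B = vec.dim (sharp B ` annih K) - vec.dim (K \<inter> sharp B ` annih K)"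

end

theory Submission
  imports Defs
begin

text \<open>Since the dual of \<open>V/K\<close> is \<open>K\<^sup>\<perp>\<close>, the image of the sharp map of \<open>c\<^sub>\<lambda>'\<close> is
  \<open>p(c\<^sub>\<lambda>\<^sup>\<sharp>(K\<^sup>\<perp>))\<close>, whose dimension is \<open>d\<^sub>\<lambda>\<close> by the dimension formula for \<open>W + K\<close>.
  Thus \<open>rank c\<^sub>\<lambda>' = d\<^sub>\<lambda>\<close>, and as \<open>d\<^sub>0 = 0\<close> the maximal rank is attained on \<open>\<lambda> \<noteq> 0\<close>,
  so constancy of the rank on \<open>\<lambda> \<noteq> 0\<close> is the same as its being maximal there.\<close>

lemma subspace_annih: "vec.subspace (annih K)"
  for K :: "(complex^'n) set"
proof -
  have "annih K = (\<Inter>v\<in>K. {xi. pairing xi v = 0})"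
    by (auto simp: annih_def)
  moreover have "vec.subspace {xi. pairing xi v = 0}" for v :: "complex^'n"
    by (simp add: vec.subspace_def pairing_def sum.distrib distrib_right mult.assoc
        flip: sum_distrib_left)
  ultimately show ?thesis
    by (simp add: vec.subspace_Int)
qed

lemma sharp_eq_transpose_mult: "sharp B = (\<lambda>xi. transpose B *v xi)"
  by (rule ext) (simp add: sharp_def)

lemma subspace_sharp_image_annih: "vec.subspace (sharp B ` annih K)"
  unfolding sharp_eq_transpose_mult
  by (rule vec.subspace_image[OF subspace_annih])

lemma quot_rank_eq_d_dim:
  assumes "vec.subspace K"
  shows "quot_rank K B = d_dim K B"
proof -
  let ?W = "sharp B ` annih K"
  have "vec.dim (quot_image_preimage K B) + vec.dim (?W \<inter> K) = vec.dim ?W + vec.dim K"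
    unfolding quot_image_preimage_def
    by (rule vec.dim_sums_Int[OF subspace_sharp_image_annih assms])
  moreover have "vec.dim (?W \<inter> K) \<le> vec.dim ?W"
    by (rule vec.dim_subset) auto
  ultimately show ?thesis
    unfolding quot_rank_def d_dim_def by (simp add: Int_commute)
qed

lemma d_dim_le_card: "d_dim K B \<le> CARD('n)"
  for B :: "complex^'n^'n"
  unfolding d_dim_def using dim_subset_UNIV_cart_gen by (meson diff_le_self le_trans)

lemma d_dim_pencil_0_0: "d_dim K (pencil 0 0 C1 C2) = 0"
proof -
  have "sharp (pencil 0 0 C1 C2) xi = 0" for xi
    by (simp add: sharp_def pencil_def vector_matrix_mult_def vec_eq_iff)
  moreover have "annih K \<noteq> {}"
    using vec.subspace_0[OF subspace_annih] by blast
  ultimately have "sharp (pencil 0 0 C1 C2) ` annih K = {0}"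
    by auto
  then show ?thesis
    by (simp add: d_dim_def)
qed

lemma eq_Max_range_off_point_iff_const:
  fixes f :: "'a \<Rightarrow> nat"
  assumes "finite (range f)" and "f z = 0"
  shows "(\<forall>x. x \<noteq> z \<longrightarrow> f x = Max (range f)) \<longleftrightarrow>
         (\<forall>x y. x \<noteq> z \<longrightarrow> y \<noteq> z \<longrightarrow> f x = f y)"
proof
  assume const: "\<forall>x y. x \<noteq> z \<longrightarrow> y \<noteq> z \<longrightarrow> f x = f y"
  show "\<forall>x. x \<noteq> z \<longrightarrow> f x = Max (range f)"
  proof (intro allI impI)
    fix x assume "x \<noteq> z"
    obtain a where a: "Max (range f) = f a"
      using Max_in[OF assms(1)] by auto
    have "f a \<le> f x"
    proof (cases "a = z")
      case True
      then show ?thesis using assms(2) by simp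
    next
      case False
      then show ?thesis using const \<open>x \<noteq> z\<close> by (metis order_refl)
    qed
    moreover have "f x \<le> Max (range f)"
      using assms(1) by simp
    ultimately show "f x = Max (range f)"
      using a by linarith
  qed
qed metis

theorem mainTheorem5:
  fixes C1 C2 :: "complex^'n^'n" and K :: "(complex^'n) set"
  assumes "is_bivector C1" and "is_bivector C2"
    and "\<exists>l1 l2. nondegenerate (pencil l1 l2 C1 C2)"
    and "vec.subspace K"
    and "quot_lin_indep K C1 C2"
  shows "(\<forall>l1 l2. (l1, l2) \<noteq> (0, 0) \<longrightarrow>
            quot_rank K (pencil l1 l2 C1 C2) = Max {quot_rank K (pencil m1 m2 C1 C2) | m1 m2. True})
       \<longleftrightarrow>
         (\<forall>l1 l2 m1 m2. (l1, l2) \<noteq> (0, 0) \<longrightarrow> (m1, m2) \<noteq> (0, 0) \<longrightarrow>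
            d_dim K (pencil l1 l2 C1 C2) = d_dim K (pencil m1 m2 C1 C2))"
proof -
  define d where "d = (\<lambda>(l1, l2). d_dim K (pencil l1 l2 C1 C2))"
  have ranks: "{quot_rank K (pencil m1 m2 C1 C2) | m1 m2. True} = range d"
    by (auto simp: d_def quot_rank_eq_d_dim[OF assms(4)])
  have "finite (range d)"
    by (rule finite_subset[of _ "{..CARD('n)}"]) (auto simp: d_def d_dim_le_card)
  from eq_Max_range_off_point_iff_const[OF this, of "(0, 0)"]
  show ?thesis
    unfolding ranks by (simp add: d_def d_dim_pencil_0_0 quot_rank_eq_d_dim[OF assms(4)])
qed

end
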